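(* In the setting below, fix an assignment matrix $A$ for which event $\mathcal A$ holds. Then, with probability at least $1-\min\{e^{-12m},(np^2)^{-12}\}$ over the random responses, $$\|{\pi^*}^\top(P-P^* )\|_2\ \le\ \frac{2e^{\kappa}\sqrt{16\max\{m,\log(np^2)\}}}{m\sqrt{np^2}} .$$
   Context: Setting. Let $n\ge1$ (number of users) and $m\ge2$ (number of items). Fix user parameters $\theta^*_1,\dots,\theta^*_n\in\mathbb R$ and item parameters $\beta^*_1,\dots,\beta^*_m\in\mathbb R$; let $\kappa=\max_i\beta^*_i-\min_i\beta^*_i$ and $\pi^*_i=e^{\beta^*_i}/\sum_{k=1}^me^{\beta^*_k}$. The responses $X_{li}\in\{0,1\}$ ($l\in[n]$, $i\in[m]$) are independent with $\Pr(X_{li}=1)=e^{\theta^*_l}/(e^{\theta^*_l}+e^{\beta^*_i})$. For an assignment matrix $A\in\{0,1\}^{n\times m}$ and $p\in(0,1]$, let $B=A^\top A$, $d=\frac32mnp^2$, and define $m\times m$ matrices $P,P^*$ by, for $i\ne j$, $P_{ij}=\frac1d\sum_{l=1}^nA_{li}A_{lj}X_{li}(1-X_{lj})$, $P^*_{ij}=\frac1d\sum_{l=1}^nA_{li}A_{lj}\mathbb E[X_{li}(1-X_{lj})]$, and $P_{ii}=1-\sum_{k\ne i}P_{ik}$, $P^*_{ii}=1-\sum_{k\ne i}P^*_{ik}$. Event $\mathcal A$: $\frac12np^2\le B_{ij}\le\frac32np^2$ for all $i\ne j$. $\|\cdot\|_2$ is the Euclidean norm of the row vector ${\pi^*}^\top(P-P^*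 )$. *)

theory Defs
  imports "HOL-Probability.Probability"
begin

text \<open>Users are indexed by {..<n}, items by {..<m}. A response configuration is a
function X :: nat \<times> nat \<Rightarrow> bool, X (l,i) = True meaning X_li = 1.\<close>

definition resp_prob :: "(nat \<Rightarrow> real) \<Rightarrow> (nat \<Rightarrow> real) \<Rightarrow> nat \<Rightarrow> nat \<Rightarrow> real" where
  "resp_prob \<theta> \<beta> l i = exp (\<theta> l) / (exp (\<theta> l) + exp (\<beta> i))"

definition resp_dist :: "nat \<Rightarrow> nat \<Rightarrow> (nat \<Rightarrow> real) \<Rightarrow> (nat \<Rightarrow> real) \<Rightarrow> (nat \<times> nat \<Rightarrow> bool) pmf" where
  "resp_dist n m \<theta> \<beta> = Pi_pmf ({..<n} \<times> {..<m}) False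
      (\<lambda>(l,i). bernoulli_pmf (resp_prob \<theta> \<beta> l i))"

definition bX :: "(nat \<times> nat \<Rightarrow> bool) \<Rightarrow> nat \<Rightarrow> nat \<Rightarrow> real" where
  "bX X l i = of_bool (X (l,i))"

definition bA :: "(nat \<Rightarrow> nat \<Rightarrow> bool) \<Rightarrow> nat \<Rightarrow> nat \<Rightarrow> real" where
  "bA A l i = of_bool (A l i)"

definition dconst :: "nat \<Rightarrow> nat \<Rightarrow> real \<Rightarrow> real" where
  "dconst n m p = 3/2 * real m * real n * p^2"

definition Bmat :: "nat \<Rightarrow> (nat \<Rightarrow> nat \<Rightarrow> bool) \<Rightarrow> nat \<Rightarrow> nat \<Rightarrow> real" where
  "Bmat n A i j = (\<Sum>l<n. bA A l i * bA A l j)"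

definition event_A :: "nat \<Rightarrow> nat \<Rightarrow> real \<Rightarrow> (nat \<Rightarrow> nat \<Rightarrow> bool) \<Rightarrow> bool" where
  "event_A n m p A \<longleftrightarrow> (\<forall>i<m. \<forall>j<m. i \<noteq> j \<longrightarrow>
      1/2 * real n * p^2 \<le> Bmat n A i j \<and> Bmat n A i j \<le> 3/2 * real n * p^2)"

definition Pmat :: "nat \<Rightarrow> nat \<Rightarrow> real \<Rightarrow> (nat \<Rightarrow> nat \<Rightarrow> bool) \<Rightarrow> (nat \<times> nat \<Rightarrow> bool) \<Rightarrow> nat \<Rightarrow> nat \<Rightarrow> real" where
  "Pmat n m p A X i j =
     (if i \<noteq> j then (1 / dconst n m p) * (\<Sum>l<n. bA A l i * bA A l j * bX X l i * (1 - bX X l j))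
      else 1 - (\<Sum>k\<in>{..<m} - {i}. (1 / dconst n m p) * (\<Sum>l<n. bA A l i * bA A l k * bX X l i * (1 - bX X l k))))"

definition Pstar :: "nat \<Rightarrow> nat \<Rightarrow> real \<Rightarrow> (nat \<Rightarrow> real) \<Rightarrow> (nat \<Rightarrow> real) \<Rightarrow> (nat \<Rightarrow> nat \<Rightarrow> bool) \<Rightarrow> nat \<Rightarrow> nat \<Rightarrow> real" where
  "Pstar n m p \<theta> \<beta> A i j =
     (let E = (\<lambda>i j. (1 / dconst n m p) * (\<Sum>l<n. bA A l i * bA A l j *
                 measure_pmf.expectation (resp_dist n m \<theta> \<beta>) (\<lambda>X. bX X l i * (1 - bX X l j))))
      in if i \<noteq> j then E i j else 1 - (\<Sum>k\<in>{..<m} - {i}. E i k))"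

definition pistar :: "nat \<Rightarrow> (nat \<Rightarrow> real) \<Rightarrow> nat \<Rightarrow> real" where
  "pistar m \<beta> i = exp (\<beta> i) / (\<Sum>k<m. exp (\<beta> k))"

definition kappa :: "nat \<Rightarrow> (nat \<Rightarrow> real) \<Rightarrow> real" where
  "kappa m \<beta> = Max (\<beta> ` {..<m}) - Min (\<beta> ` {..<m})"

definition err_norm :: "nat \<Rightarrow> nat \<Rightarrow> real \<Rightarrow> (nat \<Rightarrow> real) \<Rightarrow> (nat \<Rightarrow> real) \<Rightarrow> (nat \<Rightarrow> nat \<Rightarrow> bool) \<Rightarrow> (nat \<times> nat \<Rightarrow> bool) \<Rightarrow> real" where
  "err_norm n m p \<theta> \<beta> A X =
     sqrt (\<Sum>j<m. (\<Sum>i<m. pistar m \<beta> i * (Pmat n m p A X i j - Pstar n m p \<theta> \<beta> A i j))^2)"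

end

theory Submission
  imports Defs
begin

(*
  Write e = pistar^T (P - Pstar).  Both matrices have zero row sums, so for every vector u
    <u, e> = sum_{i,j} pistar_i (u_j - u_i) (G_ij - E G_ij),
  where G_ij is the off-diagonal formula of P; thus <u, e> is a centred function of the
  independent responses.  Flipping one response X_la changes it by at most
  (max pistar) / d * sum_j A_la A_lj |u_j - u_a|, and on the event A the squares of these changes
  sum to at most 4 e^(2 kappa) / (3 m^2 n p^2) for |u| <= 1, because max pistar <= e^kappa / m.
  McDiarmid's inequality therefore gives <u, e> a sub-Gaussian tail.  The integer vectors z with
  |z|^2 <= 4m, scaled by 1 / (2 sqrt m), are at most 48^m vectors u with |u| <= 1, and for every e
  one of them has <u, e> >= |e| / 2; a union bound over them yields the theorem.
*)

section \<open>Bounded differences for independent Boolean coordinates\<close>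

lemma two_point_mgf_le:
  fixes r l x0 x1 c :: real
  assumes r: "0 \<le> r" "r \<le> 1" and l: "l \<ge> 0" and c: "\<bar>x1 - x0\<bar> \<le> c"
  shows "(1-r) * exp (l*x0) + r * exp (l*x1) \<le> exp (l * ((1-r)*x0 + r*x1) + l^2 * c^2 / 8)"
proof -
  have ordered: "(1-q) * exp (l*y0) + q * exp (l*y1) \<le> exp (l * ((1-q)*y0 + q*y1) + l^2 * (y1-y0)^2 / 8)"
    if q: "0 \<le> q" "q \<le> 1" and y: "y0 \<le> y1" for q y0 y1 :: real
  proof -
    define z where "z = l * (y1 - y0)"
    have z: "z \<ge> 0" using l y by (simp add: z_def)
    have "q * (exp z - 1) \<ge> 0" using z q by simp
    then have pos: "1 + q * (exp z - 1) > 0" by linarith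
    have "(1-q) * exp (l*y0) + q * exp (l*y1) = exp (l*y0) * (1 + q * (exp z - 1))"
      by (simp add: z_def algebra_simps flip: exp_add)
    also have "\<dots> = exp (l*y0 + ln (1 + q * (exp z - 1)))"
      using pos by (simp add: exp_add)
    also have "\<dots> \<le> exp (l*y0 + (z*q + z^2/8))"
      using Hoeffdings_lemma_aux[OF z q(1)] by simp
    also have "l*y0 + (z*q + z^2/8) = l * ((1-q)*y0 + q*y1) + l^2 * (y1-y0)^2 / 8"
      by (simp add: z_def algebra_simps power2_eq_square)
    finally show ?thesis .
  qed
  have "(1-r) * exp (l*x0) + r * exp (l*x1) \<le> exp (l * ((1-r)*x0 + r*x1) + l^2 * (x1-x0)^2 / 8)"
  proof (cases "x0 \<le> x1")
    case False
    then show ?thesis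
      using ordered[of "1-r" x1 x0] r by (simp add: algebra_simps power2_commute)
  qed (use ordered r in blast)
  also have "\<dots> \<le> exp (l * ((1-r)*x0 + r*x1) + l^2 * c^2 / 8)"
    using power2_mono[of "x1 - x0" c] c by (simp add: mult_left_mono)
  finally show ?thesis .
qed

lemma abs_convex_comb_le:
  fixes r u w c :: real
  assumes "0 \<le> r" "r \<le> 1" "\<bar>u\<bar> \<le> c" "\<bar>w\<bar> \<le> c"
  shows "\<bar>(1-r) * u + r * w\<bar> \<le> c"
proof -
  have "\<bar>(1-r) * u + r * w\<bar> \<le> (1-r) * \<bar>u\<bar> + r * \<bar>w\<bar>"
    using assms abs_triangle_ineq[of "(1-r) * u" "r * w"] by (simp add: abs_mult)
  also have "\<dots> \<le> (1-r) * c + r * c"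
    using assms by (intro add_mono mult_left_mono) auto
  finally show ?thesis by (simp add: algebra_simps)
qed

lemma finite_set_Pi_pmf_bool:
  fixes P :: "'a \<Rightarrow> bool pmf"
  assumes "finite I"
  shows "finite (set_pmf (Pi_pmf I False P))"
proof (rule finite_subset)
  show "set_pmf (Pi_pmf I False P) \<subseteq> PiE_dflt I False (\<lambda>_. UNIV)"
    using set_Pi_pmf_subset[OF assms, of False P] by (force simp: PiE_dflt_def)
  show "finite (PiE_dflt I False (\<lambda>_. UNIV :: bool set))"
    using assms by (intro finite_PiE_dflt) auto
qed

lemma expectation_Pi_pmf_insert:
  fixes P :: "'a \<Rightarrow> bool pmf" and f :: "('a \<Rightarrow> bool) \<Rightarrow> real"
  assumes "finite I" "a \<notin> I"
  shows "measure_pmf.expectation (Pi_pmf (insert a I) False P) f =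
         measure_pmf.expectation (Pi_pmf I False P)
           (\<lambda>X. pmf (P a) False * f (X(a:=False)) + pmf (P a) True * f (X(a:=True)))"
proof -
  have fin: "finite (set_pmf (Pi_pmf I False P))" using finite_set_Pi_pmf_bool[OF assms(1)] .
  have "measure_pmf.expectation (Pi_pmf (insert a I) False P) f =
     (\<Sum>y\<in>UNIV. pmf (P a) y *\<^sub>R measure_pmf.expectation (Pi_pmf I False P \<bind> (\<lambda>X. return_pmf (X(a := y)))) f)"
    unfolding Pi_pmf_insert'[OF assms]
    by (rule pmf_expectation_bind) (auto simp: fin)
  also have "\<dots> = (\<Sum>y\<in>UNIV. pmf (P a) y * measure_pmf.expectation (Pi_pmf I False P) (\<lambda>X. f (X(a:=y))))"
    by (simp add: map_pmf_def[symmetric])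
  also have "\<dots> = measure_pmf.expectation (Pi_pmf I False P) (\<lambda>X. \<Sum>y\<in>UNIV. pmf (P a) y * f (X(a:=y)))"
    by (subst Bochner_Integration.integral_sum) (auto intro!: integrable_measure_pmf_finite fin)
  finally show ?thesis by (simp add: UNIV_bool add.commute)
qed

text \<open>McDiarmid's inequality in moment-generating-function form: the induction integrates out
  one coordinate at a time and applies the two-point bound to the conditional average.\<close>
lemma bounded_differences_mgf_le:
  fixes P :: "'a \<Rightarrow> bool pmf" and l :: real and c :: "'a \<Rightarrow> real"
  assumes "finite I" "l \<ge> 0"
    and "\<And>X a. a \<in> I \<Longrightarrow> \<bar>f (X(a:=True)) - f (X(a:=False))\<bar> \<le> c a"
  shows "measure_pmf.expectation (Pi_pmf I False P) (\<lambda>X. exp (l * f X))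
      \<le> exp (l * measure_pmf.expectation (Pi_pmf I False P) f + l^2 * (\<Sum>a\<in>I. (c a)^2) / 8)"
  using assms(1,3)
proof (induction I arbitrary: f rule: finite_induct)
  case empty
  then show ?case by simp
next
  case (insert a I)
  let ?E = "measure_pmf.expectation (Pi_pmf I False P)"
  let ?E' = "measure_pmf.expectation (Pi_pmf (insert a I) False P)"
  define r where "r = pmf (P a) True"
  have r: "0 \<le> r" "r \<le> 1" by (auto simp: r_def pmf_le_1)
  have "pmf (P a) False + pmf (P a) True = 1"
    using sum_pmf_eq_1[of UNIV "P a"] by (auto simp: UNIV_bool)
  then have pF: "pmf (P a) False = 1 - r" by (simp add: r_def)
  define h where "h = (\<lambda>X. (1-r) * f (X(a:=False)) + r * f (X(a:=True)))"
  have fin: "finite (set_pmf (Pi_pmf I False P))" using finite_set_Pi_pmf_bool[OF insert.hyps(1)] .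
  have h_diff: "\<bar>h (X(b:=True)) - h (X(b:=False))\<bar> \<le> c b" if "b \<in> I" for X b
  proof -
    have ab: "a \<noteq> b" using insert.hyps(2) that by auto
    have eq: "h (X(b:=True)) - h (X(b:=False)) =
       (1-r) * (f (X(a:=False, b:=True)) - f (X(a:=False, b:=False))) +
       r * (f (X(a:=True, b:=True)) - f (X(a:=True, b:=False)))"
      using ab by (simp add: h_def fun_upd_twist algebra_simps)
    show ?thesis unfolding eq
      by (rule abs_convex_comb_le[OF r]) (use insert.prems(1) that in blast)+
  qed
  have "?E' (\<lambda>X. exp (l * f X))
     = ?E (\<lambda>X. (1-r) * exp (l * f (X(a:=False))) + r * exp (l * f (X(a:=True))))"
    by (simp add: expectation_Pi_pmf_insert[OF insert.hyps] pF r_def)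
  also have "\<dots> \<le> ?E (\<lambda>X. exp (l * h X + l^2 * (c a)^2 / 8))"
  proof (rule integral_mono)
    fix X
    show "(1-r) * exp (l * f (X(a:=False))) + r * exp (l * f (X(a:=True)))
      \<le> exp (l * h X + l^2 * (c a)^2 / 8)"
      unfolding h_def by (rule two_point_mgf_le[OF r assms(2)]) (use insert.prems(1) in blast)
  qed (auto intro!: integrable_measure_pmf_finite fin)
  also have "\<dots> = exp (l^2 * (c a)^2 / 8) * ?E (\<lambda>X. exp (l * h X))"
    by (simp add: exp_add mult.commute)
  also have "\<dots> \<le> exp (l^2 * (c a)^2 / 8) * exp (l * ?E h + l^2 * (\<Sum>b\<in>I. (c b)^2) / 8)"
    using insert.IH[OF h_diff] by (simp add: mult_left_mono)
  also have "?E h = ?E' f"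
    by (simp add: expectation_Pi_pmf_insert[OF insert.hyps] pF r_def h_def)
  also have "exp (l^2 * (c a)^2 / 8) * exp (l * ?E' f + l^2 * (\<Sum>b\<in>I. (c b)^2) / 8)
     = exp (l * ?E' f + l^2 * (\<Sum>b\<in>insert a I. (c b)^2) / 8)"
    using insert.hyps by (simp add: exp_add[symmetric] algebra_simps add_divide_distrib)
  finally show ?case .
qed

lemma bounded_differences_tail:
  fixes P :: "'a \<Rightarrow> bool pmf" and c :: "'a \<Rightarrow> real" and S t :: real
  assumes fin: "finite I" and diff: "\<And>X a. a \<in> I \<Longrightarrow> \<bar>f (X(a:=True)) - f (X(a:=False))\<bar> \<le> c a"
    and S: "(\<Sum>a\<in>I. (c a)^2) \<le> S" "S > 0" and t: "t \<ge> 0"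
  shows "measure_pmf.prob (Pi_pmf I False P)
           {X. t \<le> f X - measure_pmf.expectation (Pi_pmf I False P) f} \<le> exp (- 2 * t^2 / S)"
proof -
  let ?p = "Pi_pmf I False P"
  let ?E = "measure_pmf.expectation ?p f"
  define l where "l = 4 * t / S"
  have l: "l \<ge> 0" using S t by (simp add: l_def)
  have finp: "finite (set_pmf ?p)" by (rule finite_set_Pi_pmf_bool[OF fin])
  have "measure_pmf.prob ?p {X. t \<le> f X - ?E}
      = measure_pmf.expectation ?p (indicator {X. t \<le> f X - ?E} :: _ \<Rightarrow> real)"
    by simp
  also have "\<dots> \<le> measure_pmf.expectation ?p (\<lambda>X. exp (- l * (?E + t)) * exp (l * f X))"
  proof (rule integral_mono)
    fix X
    have "(indicator {X. t \<le> f X - ?E} X :: real) \<le> exp (l * (f X - ?E - t))"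
      using l by (cases "t \<le> f X - ?E") auto
    then show "(indicator {X. t \<le> f X - ?E} X :: real) \<le> exp (- l * (?E + t)) * exp (l * f X)"
      by (simp add: exp_add[symmetric] algebra_simps)
  qed (auto intro!: integrable_measure_pmf_finite finp)
  also have "\<dots> \<le> exp (- l * (?E + t)) * exp (l * ?E + l^2 * (\<Sum>a\<in>I. (c a)^2) / 8)"
    by (simp add: mult_left_mono bounded_differences_mgf_le[OF fin l diff])
  also have "\<dots> = exp (- l * t + l^2 * (\<Sum>a\<in>I. (c a)^2) / 8)"
    by (simp add: exp_add[symmetric] algebra_simps)
  also have "\<dots> \<le> exp (- l * t + l^2 * S / 8)"
    using S(1) by (simp add: divide_right_mono mult_left_mono)
  also have "- l * t + l^2 * S / 8 = - 2 * t^2 / S"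
    using S(2) by (simp add: l_def field_simps power2_eq_square)
  finally show ?thesis .
qed

lemma prob_le_eq_1_minus_prob_gt:
  fixes f :: "'a \<Rightarrow> real"
  shows "measure_pmf.prob M {x. f x \<le> c} = 1 - measure_pmf.prob M {x. c < f x}"
  using measure_pmf.prob_compl[of "{x. c < f x}" M]
  by (simp add: Compl_eq_Diff_UNIV[symmetric] Collect_neg_eq[symmetric] not_less)

section \<open>The error vector as a centred statistic\<close>

lemma sum_mult_zero_row_sum:
  fixes M D :: "nat \<Rightarrow> nat \<Rightarrow> real"
  assumes M: "\<And>i j. M i j = (if i \<noteq> j then D i j else - (\<Sum>k\<in>{..<m}-{i}. D i k))"
  shows "(\<Sum>j<m. u j * (\<Sum>i<m. w i * M i j)) = (\<Sum>i<m. \<Sum>j<m. w i * (u j - u i) * D i j)"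
proof -
  have "(\<Sum>j<m. u j * (\<Sum>i<m. w i * M i j)) = (\<Sum>j<m. \<Sum>i<m. u j * w i * M i j)"
    by (simp add: sum_distrib_left mult.assoc)
  also have "\<dots> = (\<Sum>i<m. \<Sum>j<m. u j * w i * M i j)"
    by (rule sum.swap)
  also have "\<dots> = (\<Sum>i<m. \<Sum>j<m. w i * (u j - u i) * D i j)"
  proof (rule sum.cong[OF refl])
    fix i assume i: "i \<in> {..<m}"
    have "(\<Sum>j<m. u j * w i * M i j)
        = u i * w i * (- (\<Sum>k\<in>{..<m}-{i}. D i k)) + (\<Sum>j\<in>{..<m}-{i}. u j * w i * D i j)"
      using i by (simp add: sum.remove[of "{..<m}" i] M)
    also have "\<dots> = (\<Sum>j\<in>{..<m}-{i}. w i * (u j - u i) * D i j)"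
      by (simp add: sum_distrib_left sum_subtractf algebra_simps sum_negf)
    also have "\<dots> = (\<Sum>j<m. w i * (u j - u i) * D i j)"
      using i by (simp add: sum.remove[of "{..<m}" i])
    finally show "(\<Sum>j<m. u j * w i * M i j) = (\<Sum>j<m. w i * (u j - u i) * D i j)" .
  qed
  finally show ?thesis .
qed

text \<open>The off-diagonal formula of \<open>P\<close>, evaluated at every pair \<open>(i, j)\<close>; the diagonal values
  never matter, since they carry the weight \<open>u i - u i = 0\<close> in \<open>inner_stat\<close>.\<close>
definition Poff :: "nat \<Rightarrow> nat \<Rightarrow> real \<Rightarrow> (nat \<Rightarrow> nat \<Rightarrow> bool) \<Rightarrow> (nat \<times> nat \<Rightarrow> bool) \<Rightarrow> nat \<Rightarrow> nat \<Rightarrow> real"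
  where "Poff n m p A X i j = 1 / dconst n m p * (\<Sum>l<n. bA A l i * bA A l j * (bX X l i * (1 - bX X l j)))"

definition err_vec :: "nat \<Rightarrow> nat \<Rightarrow> real \<Rightarrow> (nat \<Rightarrow> real) \<Rightarrow> (nat \<Rightarrow> real) \<Rightarrow> (nat \<Rightarrow> nat \<Rightarrow> bool) \<Rightarrow> (nat \<times> nat \<Rightarrow> bool) \<Rightarrow> nat \<Rightarrow> real"
  where "err_vec n m p \<theta> \<beta> A X j = (\<Sum>i<m. pistar m \<beta> i * (Pmat n m p A X i j - Pstar n m p \<theta> \<beta> A i j))"

definition inner_stat :: "nat \<Rightarrow> nat \<Rightarrow> real \<Rightarrow> (nat \<Rightarrow> real) \<Rightarrow> (nat \<Rightarrow> nat \<Rightarrow> bool) \<Rightarrow> (nat \<Rightarrow> real) \<Rightarrow> (nat \<times> nat \<Rightarrow> bool) \<Rightarrow> real"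
  where "inner_stat n m p \<beta> A u X = (\<Sum>i<m. \<Sum>j<m. pistar m \<beta> i * (u j - u i) * Poff n m p A X i j)"

lemma err_norm_eq: "err_norm n m p \<theta> \<beta> A X = sqrt (\<Sum>j<m. (err_vec n m p \<theta> \<beta> A X j)^2)"
  by (simp add: err_norm_def err_vec_def)

lemma finite_set_resp_dist: "finite (set_pmf (resp_dist n m \<theta> \<beta>))"
  unfolding resp_dist_def by (rule finite_set_Pi_pmf_bool) simp

lemma integrable_resp_dist [simp]: "integrable (measure_pmf (resp_dist n m \<theta> \<beta>)) (f :: _ \<Rightarrow> real)"
  by (rule integrable_measure_pmf_finite[OF finite_set_resp_dist])

lemma expectation_Poff:
  "measure_pmf.expectation (resp_dist n m \<theta> \<beta>) (\<lambda>X. Poff n m p A X i j) =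
   1 / dconst n m p * (\<Sum>l<n. bA A l i * bA A l j *
     measure_pmf.expectation (resp_dist n m \<theta> \<beta>) (\<lambda>X. bX X l i * (1 - bX X l j)))"
  unfolding Poff_def by (simp add: Bochner_Integration.integral_sum)

lemma Pmat_minus_Pstar:
  fixes n m :: nat and p :: real and \<theta> \<beta> :: "nat \<Rightarrow> real"
    and A :: "nat \<Rightarrow> nat \<Rightarrow> bool" and X :: "nat \<times> nat \<Rightarrow> bool"
  defines "D \<equiv> \<lambda>i j. Poff n m p A X i j - measure_pmf.expectation (resp_dist n m \<theta> \<beta>) (\<lambda>X. Poff n m p A X i j)"
  shows "Pmat n m p A X i j - Pstar n m p \<theta> \<beta> A i j =
         (if i \<noteq> j then D i j else - (\<Sum>k\<in>{..<m}-{i}. D i k))"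
  unfolding D_def Pmat_def Pstar_def Let_def expectation_Poff
  by (simp add: Poff_def mult.assoc sum_subtractf)

lemma inner_err_vec_eq:
  "(\<Sum>j<m. u j * err_vec n m p \<theta> \<beta> A X j) =
   inner_stat n m p \<beta> A u X - measure_pmf.expectation (resp_dist n m \<theta> \<beta>) (inner_stat n m p \<beta> A u)"
proof -
  let ?E = "measure_pmf.expectation (resp_dist n m \<theta> \<beta>)"
  have "(\<Sum>j<m. u j * err_vec n m p \<theta> \<beta> A X j) =
        (\<Sum>i<m. \<Sum>j<m. pistar m \<beta> i * (u j - u i) * (Poff n m p A X i j - ?E (\<lambda>X. Poff n m p A X i j)))"
    unfolding err_vec_def by (rule sum_mult_zero_row_sum) (rule Pmat_minus_Pstar)
  moreover have "?E (inner_stat n m p \<beta> A u) =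
        (\<Sum>i<m. \<Sum>j<m. pistar m \<beta> i * (u j - u i) * ?E (\<lambda>X. Poff n m p A X i j))"
    unfolding inner_stat_def by (simp add: Bochner_Integration.integral_sum)
  ultimately show ?thesis
    by (simp add: inner_stat_def right_diff_distrib sum_subtractf)
qed

section \<open>Bounded differences of the statistic\<close>

lemma bX_upd: "bX (X(q:=v)) l k = (if (l,k) = q then of_bool v else bX X l k)"
  by (simp add: bX_def)

lemma Poff_flip:
  assumes "l < n"
  shows "Poff n m p A (X((l,a):=True)) i j - Poff n m p A (X((l,a):=False)) i j =
    1 / dconst n m p * (bA A l i * bA A l j *
      (of_bool (i = a \<and> j \<noteq> a) * (1 - bX X l j) - of_bool (j = a \<and> i \<noteq> a) * bX X l i))"
proof -
  let ?F = "\<lambda>Y l'. bA A l' i * bA A l' j * (bX Y l' i * (1 - bX Y l' j))"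
  have "(\<Sum>l'<n. ?F (X((l,a):=True)) l' - ?F (X((l,a):=False)) l') =
        ?F (X((l,a):=True)) l - ?F (X((l,a):=False)) l"
    using assms by (subst sum.mono_neutral_right[of "{..<n}" "{l}"]) (auto simp: bX_upd)
  also have "\<dots> = bA A l i * bA A l j *
      (of_bool (i = a \<and> j \<noteq> a) * (1 - bX X l j) - of_bool (j = a \<and> i \<noteq> a) * bX X l i)"
    by (auto simp: bX_upd)
  finally have "(\<Sum>l'<n. ?F (X((l,a):=True)) l' - ?F (X((l,a):=False)) l') = \<dots>" .
  moreover have "Poff n m p A Y i j = 1 / dconst n m p * (\<Sum>l'<n. ?F Y l')" for Y
    by (simp add: Poff_def)
  ultimately show ?thesis
    by (simp only: sum_subtractf[symmetric] right_diff_distrib[symmetric])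
qed

lemma inner_stat_flip:
  assumes "l < n" "a < m"
  shows "inner_stat n m p \<beta> A u (X((l,a):=True)) - inner_stat n m p \<beta> A u (X((l,a):=False)) =
    1 / dconst n m p * (\<Sum>j<m. bA A l a * bA A l j * (u j - u a) *
      (pistar m \<beta> a * (1 - bX X l j) + pistar m \<beta> j * bX X l j))"
proof -
  let ?c = "1 / dconst n m p"
  let ?w = "\<lambda>i j. pistar m \<beta> i * (u j - u i)"
  let ?f = "\<lambda>j. ?w a j * bA A l a * bA A l j * (1 - bX X l j)"
  let ?g = "\<lambda>i. ?w i a * bA A l i * bA A l a * bX X l i"
  have weighted_flip: "?w i j * Poff n m p A (X((l,a):=True)) i j - ?w i j * Poff n m p A (X((l,a):=False)) i j =
      ?c * (of_bool (i = a) * ?f j) - ?c * (?g i * of_bool (j = a))" for i j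
    by (cases "i = j") (auto simp: Poff_flip[OF assms(1)] simp flip: right_diff_distrib)
  have "inner_stat n m p \<beta> A u (X((l,a):=True)) - inner_stat n m p \<beta> A u (X((l,a):=False)) =
      (\<Sum>i<m. \<Sum>j<m. ?c * (of_bool (i = a) * ?f j)) - (\<Sum>i<m. \<Sum>j<m. ?c * (?g i * of_bool (j = a)))"
    unfolding inner_stat_def sum_subtractf[symmetric] weighted_flip ..
  also have "\<dots> = ?c * (\<Sum>j<m. ?f j) - ?c * (\<Sum>i<m. ?g i)"
  proof -
    have "(\<Sum>i<m. \<Sum>j<m. c * (of_bool (i = a) * F j)) = c * (\<Sum>j<m. F j)"
      and "(\<Sum>i<m. \<Sum>j<m. c * (G i * of_bool (j = a))) = c * (\<Sum>i<m. G i)" for c :: real and F G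
      using assms(2) by (simp_all add: sum_distrib_left[symmetric])
    then show ?thesis by (simp only:)
  qed
  also have "\<dots> = ?c * (\<Sum>j<m. ?f j - ?g j)"
    by (simp only: sum_subtractf) (rule right_diff_distrib[symmetric])
  also have "\<dots> = ?c * (\<Sum>j<m. bA A l a * bA A l j * (u j - u a) *
      (pistar m \<beta> a * (1 - bX X l j) + pistar m \<beta> j * bX X l j))"
    by (rule arg_cong[where f="(*) ?c"], rule sum.cong[OF refl]) (simp add: algebra_simps)
  finally show ?thesis .
qed

lemma inner_stat_flip_le:
  assumes "l < n" "a < m" "0 < dconst n m p"
    and pi: "\<And>i. i < m \<Longrightarrow> 0 \<le> pistar m \<beta> i \<and> pistar m \<beta> i \<le> pm"
  shows "\<bar>inner_stat n m p \<beta> A u (X((l,a):=True)) - inner_stat n m p \<beta> A u (X((l,a):=False))\<bar>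
     \<le> pm / dconst n m p * (\<Sum>j<m. bA A l a * bA A l j * \<bar>u j - u a\<bar>)"
proof -
  have term_le: "\<bar>bA A l a * bA A l j * (u j - u a) * (pistar m \<beta> a * (1 - bX X l j) + pistar m \<beta> j * bX X l j)\<bar>
      \<le> pm * (bA A l a * bA A l j * \<bar>u j - u a\<bar>)" if "j < m" for j
  proof -
    let ?s = "pistar m \<beta> a * (1 - bX X l j) + pistar m \<beta> j * bX X l j"
    have s: "0 \<le> ?s" "?s \<le> pm"
      using pi[OF assms(2)] pi[OF that] by (auto simp: bX_def)
    have "\<bar>bA A l a * bA A l j * (u j - u a) * ?s\<bar> = bA A l a * bA A l j * \<bar>u j - u a\<bar> * ?s"
      using s(1) by (simp add: abs_mult bA_def)
    also have "\<dots> \<le> bA A l a * bA A l j * \<bar>u j - u a\<bar> * pm"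
      using s(2) by (rule mult_left_mono) (simp add: bA_def)
    finally show ?thesis by (simp add: mult.commute)
  qed
  have "\<bar>inner_stat n m p \<beta> A u (X((l,a):=True)) - inner_stat n m p \<beta> A u (X((l,a):=False))\<bar>
     \<le> 1 / dconst n m p * (\<Sum>j<m. \<bar>bA A l a * bA A l j * (u j - u a) *
          (pistar m \<beta> a * (1 - bX X l j) + pistar m \<beta> j * bX X l j)\<bar>)"
    unfolding inner_stat_flip[OF assms(1,2)] abs_mult[of "1 / dconst n m p"] using assms(3)
    by (intro mult_mono sum_abs) auto
  also have "\<dots> \<le> 1 / dconst n m p * (\<Sum>j<m. pm * (bA A l a * bA A l j * \<bar>u j - u a\<bar>))"
    using assms(3) term_le by (intro mult_left_mono sum_mono) auto
  finally show ?thesis by (simp add: sum_distrib_left)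
qed

lemma sum_sq_diff_le: "(\<Sum>a<m. \<Sum>j<m. (u j - u a)^2) \<le> 2 * real m * (\<Sum>j<m. (u j)^2)"
proof -
  have "(\<Sum>a<m. \<Sum>j<m. (u j - u a)^2) = (\<Sum>a<m. \<Sum>j<m. (u j)^2 + (u a)^2 - 2 * (u j * u a))"
    by (intro sum.cong refl) (simp add: power2_eq_square algebra_simps)
  also have "\<dots> = 2 * real m * (\<Sum>j<m. (u j)^2) - 2 * (\<Sum>j<m. u j)^2"
    by (simp add: sum.distrib sum_subtractf sum_distrib_left[symmetric] sum_distrib_right[symmetric]
        power2_eq_square algebra_simps)
  finally show ?thesis by simp
qed

lemma sum_Bmat_sq_diff_le:
  assumes "event_A n m p A"
  shows "(\<Sum>l<n. \<Sum>a<m. \<Sum>j<m. bA A l a * bA A l j * (u j - u a)^2)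
     \<le> 3/2 * real n * p^2 * (2 * real m * (\<Sum>j<m. (u j)^2))"
proof -
  have "(\<Sum>l<n. \<Sum>a<m. \<Sum>j<m. bA A l a * bA A l j * (u j - u a)^2)
      = (\<Sum>a<m. \<Sum>j<m. \<Sum>l<n. bA A l a * bA A l j * (u j - u a)^2)"
    by (subst sum.swap) (rule sum.cong[OF refl], rule sum.swap)
  also have "\<dots> = (\<Sum>a<m. \<Sum>j<m. Bmat n A a j * (u j - u a)^2)"
    by (simp add: Bmat_def sum_distrib_right)
  also have "\<dots> \<le> (\<Sum>a<m. \<Sum>j<m. 3/2 * real n * p^2 * (u j - u a)^2)"
  proof (intro sum_mono)
    fix a j assume "a \<in> {..<m}" "j \<in> {..<m}"
    show "Bmat n A a j * (u j - u a)^2 \<le> 3/2 * real n * p^2 * (u j - u a)^2"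
    proof (cases "a = j")
      case False
      with \<open>a \<in> {..<m}\<close> \<open>j \<in> {..<m}\<close> have "Bmat n A a j \<le> 3/2 * real n * p^2"
        using assms unfolding event_A_def by auto
      then show ?thesis by (rule mult_right_mono) simp
    qed simp
  qed
  also have "\<dots> = 3/2 * real n * p^2 * (\<Sum>a<m. \<Sum>j<m. (u j - u a)^2)"
    by (simp add: sum_distrib_left)
  also have "\<dots> \<le> 3/2 * real n * p^2 * (2 * real m * (\<Sum>j<m. (u j)^2))"
    by (intro mult_left_mono sum_sq_diff_le) simp
  finally show ?thesis .
qed

text \<open>Cauchy--Schwarz in \<open>j\<close> turns the squared flip bounds into a quadratic form in the
  co-occurrence counts \<open>B\<close>, which is where event \<open>\<A>\<close> enters.\<close>
lemma sum_sq_flip_bounds_le: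
  assumes "event_A n m p A"
  shows "(\<Sum>(l,a)\<in>{..<n} \<times> {..<m}. (pm / dconst n m p * (\<Sum>j<m. bA A l a * bA A l j * \<bar>u j - u a\<bar>))^2)
     \<le> 3 * (real m * pm / dconst n m p)^2 * real n * p^2 * (\<Sum>j<m. (u j)^2)"
proof -
  let ?c = "pm / dconst n m p"
  have cs: "(\<Sum>j<m. bA A l a * bA A l j * \<bar>u j - u a\<bar>)^2 \<le> real m * (\<Sum>j<m. bA A l a * bA A l j * (u j - u a)^2)"
    for l a
  proof -
    have "(\<Sum>j<m. bA A l a * bA A l j * \<bar>u j - u a\<bar>)^2
        \<le> (\<Sum>j<m. (bA A l a * bA A l j * \<bar>u j - u a\<bar>)^2) * card {..<m}"
      by (rule sum_squared_le_sum_of_squares)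
    also have "(\<Sum>j<m. (bA A l a * bA A l j * \<bar>u j - u a\<bar>)^2) = (\<Sum>j<m. bA A l a * bA A l j * (u j - u a)^2)"
      by (intro sum.cong refl) (auto simp: bA_def power2_eq_square)
    finally show ?thesis by (simp add: mult.commute)
  qed
  have "(\<Sum>(l,a)\<in>{..<n} \<times> {..<m}. (?c * (\<Sum>j<m. bA A l a * bA A l j * \<bar>u j - u a\<bar>))^2)
      \<le> (\<Sum>(l,a)\<in>{..<n} \<times> {..<m}. ?c^2 * (real m * (\<Sum>j<m. bA A l a * bA A l j * (u j - u a)^2)))"
    unfolding power_mult_distrib by (intro sum_mono) (auto intro: mult_left_mono[OF cs])
  also have "\<dots> = ?c^2 * real m * (\<Sum>l<n. \<Sum>a<m. \<Sum>j<m. bA A l a * bA A l j * (u j - u a)^2)"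
    by (simp add: sum.cartesian_product[symmetric] sum_distrib_left mult.assoc)
  also have "\<dots> \<le> ?c^2 * real m * (3/2 * real n * p^2 * (2 * real m * (\<Sum>j<m. (u j)^2)))"
    using sum_Bmat_sq_diff_le[OF assms] by (rule mult_left_mono) simp
  also have "\<dots> = 3 * (real m * pm / dconst n m p)^2 * real n * p^2 * (\<Sum>j<m. (u j)^2)"
    by (simp add: power2_eq_square mult_ac)
  finally show ?thesis by simp
qed

lemma inner_stat_tail:
  assumes "event_A n m p A" "0 < dconst n m p" "0 < pm"
    and pi: "\<And>i. i < m \<Longrightarrow> 0 \<le> pistar m \<beta> i \<and> pistar m \<beta> i \<le> pm"
    and u: "(\<Sum>j<m. (u j)^2) \<le> 1" and "t \<ge> 0"
  shows "measure_pmf.prob (resp_dist n m \<theta> \<beta>)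
     {X. t \<le> inner_stat n m p \<beta> A u X - measure_pmf.expectation (resp_dist n m \<theta> \<beta>) (inner_stat n m p \<beta> A u)}
     \<le> exp (- 2 * t^2 / (3 * (real m * pm / dconst n m p)^2 * real n * p^2))"
  unfolding resp_dist_def
proof (rule bounded_differences_tail
    [where c = "\<lambda>(l,a). pm / dconst n m p * (\<Sum>j<m. bA A l a * bA A l j * \<bar>u j - u a\<bar>)"])
  show "\<bar>inner_stat n m p \<beta> A u (X(la := True)) - inner_stat n m p \<beta> A u (X(la := False))\<bar>
     \<le> (case la of (l, a) \<Rightarrow> pm / dconst n m p * (\<Sum>j<m. bA A l a * bA A l j * \<bar>u j - u a\<bar>))"
    if "la \<in> {..<n} \<times> {..<m}" for X la
    using that inner_stat_flip_le[OF _ _ assms(2) pi] by auto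
  have "(\<Sum>la\<in>{..<n} \<times> {..<m}. (case la of (l, a) \<Rightarrow> pm / dconst n m p * (\<Sum>j<m. bA A l a * bA A l j * \<bar>u j - u a\<bar>))^2)
     \<le> 3 * (real m * pm / dconst n m p)^2 * real n * p^2 * (\<Sum>j<m. (u j)^2)"
    using sum_sq_flip_bounds_le[OF assms(1)] by (simp add: case_prod_unfold)
  also have "\<dots> \<le> 3 * (real m * pm / dconst n m p)^2 * real n * p^2"
    using u by (intro mult_left_le) auto
  finally show "(\<Sum>la\<in>{..<n} \<times> {..<m}. (case la of (l, a) \<Rightarrow> pm / dconst n m p * (\<Sum>j<m. bA A l a * bA A l j * \<bar>u j - u a\<bar>))^2)
     \<le> 3 * (real m * pm / dconst n m p)^2 * real n * p^2" .
  show "0 < 3 * (real m * pm / dconst n m p)^2 * real n * p^2"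
    using assms(2,3) by (intro mult_pos_pos) (auto simp: dconst_def zero_less_mult_iff)
qed (use assms(6) in auto)

section \<open>An integer net of the unit ball\<close>

definition int_net :: "nat \<Rightarrow> (nat \<Rightarrow> int) set" where
  "int_net m = {z \<in> PiE {..<m} (\<lambda>_. {-int (2*m)..int (2*m)}). (\<Sum>j<m. (z j)^2) \<le> 4 * int m}"

lemma int_net_sum_sq_le:
  assumes "m > 0" "z \<in> int_net m"
  shows "(\<Sum>j<m. (real_of_int (z j) / (2 * sqrt m))^2) \<le> 1"
proof -
  have "real_of_int (\<Sum>j<m. (z j)^2) \<le> real_of_int (4 * int m)"
    using assms(2) by (simp only: of_int_le_iff) (simp add: int_net_def)
  then have "(\<Sum>j<m. real_of_int (z j) ^ 2) / (4 * real m) \<le> 1"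
    using assms(1) by (simp add: of_int_sum)
  then show ?thesis
    using assms(1) by (simp add: power_divide power_mult_distrib sum_divide_distrib)
qed

lemma sum_half_power_abs: "(\<Sum>k\<in>{-int K..int K}. (1/2::real) ^ nat \<bar>k\<bar>) = 3 - 2 * (1/2)^K"
proof (induction K)
  case (Suc K)
  have "{-int (Suc K)..int (Suc K)} = insert (int (Suc K)) (insert (- int (Suc K)) {-int K..int K})"
    by auto
  moreover have "nat (1 + int K) = Suc K" "nat (int K + 1) = Suc K" by auto
  ultimately show ?case using Suc by simp
qed simp

text \<open>Each point of the net has weight \<open>16^m \<Prod>j 2^-|z j| \<ge> 1\<close>, and the total weight of the
  box containing the net is at most \<open>16^m 3^m\<close>.\<close>
lemma card_int_net_le: "real (card (int_net m)) \<le> 48 ^ m"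
proof -
  let ?B = "PiE {..<m} (\<lambda>_. {-int (2*m)..int (2*m)})"
  let ?w = "\<lambda>z. (2::real)^(4*m) * (\<Prod>j<m. (1/2::real) ^ nat \<bar>z j\<bar>)"
  have finB: "finite ?B" by (intro finite_PiE) auto
  have sub: "int_net m \<subseteq> ?B" by (auto simp: int_net_def)
  have w1: "1 \<le> ?w z" if "z \<in> int_net m" for z
  proof -
    have "\<bar>k\<bar> \<le> k^2" for k :: int
    proof -
      have "\<bar>k\<bar> * 1 \<le> \<bar>k\<bar> * \<bar>k\<bar>" if "k \<noteq> 0" using that by (intro mult_left_mono) auto
      then show ?thesis by (cases "k = 0") (auto simp: power2_eq_square abs_mult_self_eq)
    qed
    then have "(\<Sum>j<m. \<bar>z j\<bar>) \<le> (\<Sum>j<m. (z j)^2)"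
      by (intro sum_mono)
    also have "\<dots> \<le> 4 * int m" using that by (simp add: int_net_def)
    finally have "int (\<Sum>j<m. nat \<bar>z j\<bar>) \<le> int (4 * m)" by (simp add: of_nat_sum)
    then have "(\<Sum>j<m. nat \<bar>z j\<bar>) \<le> 4 * m" by (simp only: of_nat_le_iff)
    then have "(1/2::real)^(4*m) \<le> (1/2)^(\<Sum>j<m. nat \<bar>z j\<bar>)" by (intro power_decreasing) auto
    also have "\<dots> = (\<Prod>j<m. (1/2::real) ^ nat \<bar>z j\<bar>)" by (simp add: power_sum)
    finally have "(2::real)^(4*m) * (1/2)^(4*m) \<le> ?w z" by (intro mult_left_mono) auto
    then show ?thesis by (simp flip: power_mult_distrib)
  qed
  have "real (card (int_net m)) \<le> (\<Sum>z\<in>int_net m. ?w z)"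
    using sum_mono[OF w1] by simp
  also have "\<dots> \<le> (\<Sum>z\<in>?B. ?w z)"
    by (rule sum_mono2[OF finB sub]) (intro mult_nonneg_nonneg prod_nonneg; simp)
  also have "\<dots> = 2^(4*m) * (\<Prod>j<m. \<Sum>k\<in>{-int (2*m)..int (2*m)}. (1/2::real) ^ nat \<bar>k\<bar>)"
    by (subst prod_sum_PiE) (auto simp: sum_distrib_left)
  also have "\<dots> \<le> 2^(4*m) * 3^m"
  proof -
    let ?S = "\<Sum>k\<in>{-int (2*m)..int (2*m)}. (1/2::real) ^ nat \<bar>k\<bar>"
    have "(1/2::real)^(2*m) \<le> 1" by (rule power_le_one) auto
    then have "?S \<le> 3" "0 \<le> ?S"
      using sum_half_power_abs[of "2*m"] by (auto intro: sum_nonneg)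
    then show ?thesis by (simp add: power_mono)
  qed
  also have "\<dots> = 48^m" by (simp add: power_mult flip: power_mult_distrib)
  finally show ?thesis .
qed

lemma trunc_toward_zero:
  fixes v :: real
  defines "z \<equiv> (if v \<ge> 0 then \<lfloor>v\<rfloor> else - \<lfloor>-v\<rfloor>)"
  shows "\<bar>real_of_int z\<bar> \<le> \<bar>v\<bar>" "v^2 - \<bar>v\<bar> \<le> real_of_int z * v"
proof -
  show "\<bar>real_of_int z\<bar> \<le> \<bar>v\<bar>"
    unfolding z_def by (cases "v \<ge> 0") auto
  show "v^2 - \<bar>v\<bar> \<le> real_of_int z * v"
  proof (cases "v \<ge> 0")
    case True
    have "(v - 1) * v \<le> real_of_int \<lfloor>v\<rfloor> * v"
      using True by (intro mult_right_mono) linarith+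
    then show ?thesis using True by (simp add: z_def power2_eq_square algebra_simps)
  next
    case False
    have "(-v - 1) * (-v) \<le> real_of_int \<lfloor>-v\<rfloor> * (-v)"
      using False by (intro mult_right_mono) linarith+
    then show ?thesis using False by (simp add: z_def power2_eq_square algebra_simps)
  qed
qed

text \<open>Rounding a vector of norm \<open>2 \<surd>m\<close> toward zero loses at most \<open>|v j|\<close> in each
  coordinate of \<open>\<langle>z, v\<rangle>\<close>, and \<open>\<Sum>j |v j| \<le> \<Sum>j (v j)\<^sup>2 / 4 + m\<close>.\<close>
lemma int_net_correlates:
  fixes v :: "nat \<Rightarrow> real"
  assumes sumv: "(\<Sum>j<m. (v j)^2) = 4 * real m"
  shows "\<exists>z\<in>int_net m. 2 * real m \<le> (\<Sum>j<m. real_of_int (z j) * v j)"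
proof
  define z where "z = restrict (\<lambda>j. if v j \<ge> 0 then \<lfloor>v j\<rfloor> else - \<lfloor>-v j\<rfloor>) {..<m}"
  have zabs: "\<bar>real_of_int (z j)\<bar> \<le> \<bar>v j\<bar>" and zv: "(v j)^2 - \<bar>v j\<bar> \<le> real_of_int (z j) * v j"
    if "j < m" for j
    using trunc_toward_zero[of "v j"] that by (simp_all add: z_def)
  have vle: "\<bar>v j\<bar> \<le> 2 * real m" if "j < m" for j
  proof -
    have "\<bar>v j\<bar>^2 \<le> (2 * sqrt m)^2"
      using member_le_sum[of j "{..<m}" "\<lambda>j. (v j)^2"] that sumv by (simp add: power_mult_distrib)
    then have "\<bar>v j\<bar> \<le> 2 * sqrt m" by (rule power2_le_imp_le) simp
    also have "sqrt (real m) \<le> real m"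
      using real_sqrt_le_mono[of "real m" "real m * real m"] by (cases m) auto
    finally show ?thesis by simp
  qed
  show "z \<in> int_net m"
    unfolding int_net_def
  proof (intro CollectI conjI PiE_I)
    fix j assume j: "j \<in> {..<m}"
    have "\<bar>real_of_int (z j)\<bar> \<le> 2 * real m" using zabs[of j] vle[of j] j by auto
    then show "z j \<in> {-int (2*m)..int (2*m)}" by simp linarith
  next
    have "(\<Sum>j<m. real_of_int ((z j)^2)) \<le> (\<Sum>j<m. (v j)^2)"
      using zabs by (intro sum_mono) (simp add: power2_mono)
    then have "real_of_int (\<Sum>j<m. (z j)^2) \<le> real_of_int (4 * int m)"
      using sumv by (simp add: of_int_sum)
    then show "(\<Sum>j<m. (z j)^2) \<le> 4 * int m" by (simp only: of_int_le_iff)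
  qed (simp add: z_def)
  have "(\<Sum>j<m. 3/4 * (v j)^2 - 1) \<le> (\<Sum>j<m. real_of_int (z j) * v j)"
  proof (rule sum_mono)
    fix j assume "j \<in> {..<m}"
    moreover have "4 * \<bar>v j\<bar> \<le> (v j)^2 + 4"
      using zero_le_power2[of "\<bar>v j\<bar> - 2"] by (simp add: power2_eq_square algebra_simps)
    ultimately show "3/4 * (v j)^2 - 1 \<le> real_of_int (z j) * v j" using zv[of j] by simp
  qed
  also have "(\<Sum>j<m. 3/4 * (v j)^2 - 1) = 2 * real m"
    unfolding sum_subtractf sum_distrib_left[symmetric] sumv by simp
  finally show "2 * real m \<le> (\<Sum>j<m. real_of_int (z j) * v j)" .
qed

lemma int_net_norming:
  fixes e :: "nat \<Rightarrow> real"
  assumes "m > 0"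
  shows "\<exists>z\<in>int_net m. sqrt (\<Sum>j<m. (e j)^2) / 2 \<le> (\<Sum>j<m. real_of_int (z j) / (2 * sqrt m) * e j)"
proof (cases "(\<Sum>j<m. (e j)^2) = 0")
  case True
  have "restrict (\<lambda>_. 0) {..<m} \<in> int_net m" by (auto simp: int_net_def)
  then show ?thesis using True by (intro bexI[of _ "restrict (\<lambda>_. 0) {..<m}"]) auto
next
  case False
  define R where "R = sqrt (\<Sum>j<m. (e j)^2)"
  have R2: "R^2 = (\<Sum>j<m. (e j)^2)" unfolding R_def by (simp add: sum_nonneg)
  have R: "R > 0" using False unfolding R_def by (simp add: sum_nonneg order_less_le)
  have sm: "sqrt (real m) > 0" using assms by simp
  define s where "s = 2 * sqrt m / R"
  have "(\<Sum>j<m. (s * e j)^2) = s^2 * R^2"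
    by (simp only: power_mult_distrib sum_distrib_left[symmetric] R2)
  also have "\<dots> = 4 * real m"
    using R by (simp add: s_def power_divide power_mult_distrib)
  finally have "(\<Sum>j<m. (s * e j)^2) = 4 * real m" .
  then obtain z where z: "z \<in> int_net m" and zs: "2 * real m \<le> (\<Sum>j<m. real_of_int (z j) * (s * e j))"
    using int_net_correlates[where v="\<lambda>j. s * e j"] by auto
  have "(\<Sum>j<m. real_of_int (z j) / (2 * sqrt m) * e j) = (\<Sum>j<m. real_of_int (z j) * (s * e j)) * (R / (4 * m))"
  proof -
    have "(\<Sum>j<m. real_of_int (z j) * (s * e j)) * (R / (4 * m)) = (\<Sum>j<m. real_of_int (z j) * e j * (s * R / (4 * m)))"
      by (simp add: sum_distrib_right mult.assoc mult.left_commute sum_divide_distrib)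
    also have "s * R / (4 * m) = 1 / (2 * sqrt m)"
      using R sm by (simp add: s_def field_simps)
    finally show ?thesis by (simp add: mult.commute mult.left_commute)
  qed
  also have "\<dots> \<ge> 2 * real m * (R / (4 * m))" using zs R by (intro mult_right_mono) auto
  finally show ?thesis using z assms unfolding R_def by auto
qed

lemma pistar_le_exp_kappa:
  assumes "i < m"
  shows "0 \<le> pistar m \<beta> i \<and> pistar m \<beta> i \<le> exp (kappa m \<beta>) / real m"
proof -
  let ?S = "\<beta> ` {..<m}"
  have fin: "finite ?S" "?S \<noteq> {}" using assms by auto
  have "(\<Sum>k<m. exp (Min ?S)) \<le> (\<Sum>k<m. exp (\<beta> k))"
    using fin by (intro sum_mono) auto
  then have sum_ge: "real m * exp (Min ?S) \<le> (\<Sum>k<m. exp (\<beta> k))" by simp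
  have pos: "0 < real m * exp (Min ?S)" using assms by simp
  have "pistar m \<beta> i \<le> exp (Max ?S) / (real m * exp (Min ?S))"
    unfolding pistar_def using sum_ge pos fin assms by (intro frac_le) auto
  also have "\<dots> = exp (kappa m \<beta>) / real m"
    by (simp add: kappa_def exp_diff)
  finally show ?thesis using pos sum_ge by (simp add: pistar_def)
qed

text \<open>Union bound over the net: whenever \<open>\<parallel>e\<parallel> > 2t\<close>, some net point \<open>z\<close> gives
  \<open>u = z / (2 \<surd>m)\<close> with \<open>\<langle>u, e\<rangle> \<ge> \<parallel>e\<parallel>/2 > t\<close>.\<close>
lemma prob_err_norm_gt_le:
  assumes "event_A n m p A" "0 < dconst n m p" "0 < pm"
    and pi: "\<And>i. i < m \<Longrightarrow> 0 \<le> pistar m \<beta> i \<and> pistar m \<beta> i \<le> pm" and "t \<ge> 0"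
  shows "measure_pmf.prob (resp_dist n m \<theta> \<beta>) {X. 2 * t < err_norm n m p \<theta> \<beta> A X}
     \<le> 48 ^ m * exp (- 2 * t^2 / (3 * (real m * pm / dconst n m p)^2 * real n * p^2))"
proof -
  let ?P = "resp_dist n m \<theta> \<beta>"
  let ?bound = "exp (- 2 * t^2 / (3 * (real m * pm / dconst n m p)^2 * real n * p^2))"
  define u where "u z j = real_of_int (z j) / (2 * sqrt m)" for z :: "nat \<Rightarrow> int" and j
  define Ev where "Ev z = {X. t \<le> inner_stat n m p \<beta> A (u z) X -
                               measure_pmf.expectation ?P (inner_stat n m p \<beta> A (u z))}" for z
  have m: "m > 0" using assms(2) by (auto simp: dconst_def zero_less_mult_iff)
  have Ev: "measure_pmf.prob ?P (Ev z) \<le> ?bound" if "z \<in> int_net m" for z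
    using inner_stat_tail[OF assms(1-3) pi int_net_sum_sq_le[OF m that] assms(5)]
    unfolding Ev_def u_def .
  have "{X. 2 * t < err_norm n m p \<theta> \<beta> A X} \<subseteq> (\<Union>z\<in>int_net m. Ev z)"
  proof
    fix X assume "X \<in> {X. 2 * t < err_norm n m p \<theta> \<beta> A X}"
    then have big: "2 * t < sqrt (\<Sum>j<m. (err_vec n m p \<theta> \<beta> A X j)^2)" by (simp add: err_norm_eq)
    obtain z where z: "z \<in> int_net m" and
      "sqrt (\<Sum>j<m. (err_vec n m p \<theta> \<beta> A X j)^2) / 2 \<le> (\<Sum>j<m. u z j * err_vec n m p \<theta> \<beta> A X j)"
      using int_net_norming[OF m, of "err_vec n m p \<theta> \<beta> A X"] by (auto simp: u_def)
    with big have "X \<in> Ev z"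
      unfolding Ev_def inner_err_vec_eq by simp
    with z show "X \<in> (\<Union>z\<in>int_net m. Ev z)" by blast
  qed
  then have "measure_pmf.prob ?P {X. 2 * t < err_norm n m p \<theta> \<beta> A X} \<le> measure_pmf.prob ?P (\<Union>z\<in>int_net m. Ev z)"
    by (rule measure_pmf.finite_measure_mono) simp
  also have "\<dots> \<le> (\<Sum>z\<in>int_net m. measure_pmf.prob ?P (Ev z))"
    by (rule measure_pmf.finite_measure_subadditive_finite)
       (auto simp: int_net_def intro: finite_subset[OF _ finite_PiE[of "{..<m}"]])
  also have "\<dots> \<le> real (card (int_net m)) * ?bound"
    using sum_mono[OF Ev] by simp
  also have "\<dots> \<le> 48 ^ m * ?bound"
    by (rule mult_right_mono[OF card_int_net_le]) simp
  finally show ?thesis .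
qed

lemma pow48_mult_exp_le_min:
  fixes M x :: real
  assumes "real m \<le> M" "ln x \<le> M" "0 < x"
  shows "48 ^ m * exp (- (24 * M)) \<le> min (exp (- 12 * real m)) (x powr (-12))"
proof -
  have "(7::real) \<le> exp 6" using exp_ge_add_one_self[of 6] by simp
  then have "(7::real) * 7 \<le> exp 6 * exp 6" by (intro mult_mono) auto
  then have "(48::real) \<le> exp 12" by (simp flip: exp_add)
  then have "(48::real) ^ m \<le> exp 12 ^ m" by (rule power_mono) simp
  also have "\<dots> = exp (real m * 12)" by (simp add: exp_of_nat_mult)
  also have "\<dots> \<le> exp (12 * M)" using assms(1) by simp
  finally have "48 ^ m * exp (- (24 * M)) \<le> exp (12 * M) * exp (- (24 * M))" by simp
  also have "\<dots> = exp (- (12 * M))" by (simp flip: exp_add)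
  also have "\<dots> \<le> min (exp (- 12 * real m)) (exp (- 12 * ln x))" using assms(1,2) by simp
  also have "exp (- 12 * ln x) = x powr (-12)" using assms(3) by (simp add: powr_def)
  finally show ?thesis .
qed

lemma tail_exponent_eq:
  fixes K M :: real
  assumes "0 < K" "0 < M" "0 < m" "0 < real n * p^2"
  shows "- 2 * (K * sqrt (16 * M) / (real m * sqrt (real n * p^2)))^2
           / (3 * (real m * (K / real m) / dconst n m p)^2 * real n * p^2) = - (24 * M)"
proof -
  define x where "x = real n * p^2"
  have x: "0 < x" and m: "0 < real m" using assms by (auto simp: x_def)
  have S: "3 * (real m * (K / real m) / dconst n m p)^2 * real n * p^2 = 4 * K^2 / (3 * (real m)^2 * x)"
    using m x by (simp add: dconst_def x_def power2_eq_square field_simps)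
  have T: "(K * sqrt (16 * M) / (real m * sqrt (real n * p^2)))^2 = 16 * K^2 * M / ((real m)^2 * x)"
    using assms(2) x by (simp add: power_divide power_mult_distrib flip: x_def)
  show ?thesis
    unfolding S T using assms(1) m x by (simp add: field_simps)
qed

theorem mainTheorem12:
  fixes n m :: nat and p :: real and \<theta> \<beta> :: "nat \<Rightarrow> real"
    and A :: "nat \<Rightarrow> nat \<Rightarrow> bool"
  assumes "n \<ge> 1" and "m \<ge> 2" and "0 < p" and "p \<le> 1"
    and "event_A n m p A"
  shows "measure_pmf.prob (resp_dist n m \<theta> \<beta>)
           {X. err_norm n m p \<theta> \<beta> A X \<le>
               2 * exp (kappa m \<beta>) * sqrt (16 * max (real m) (ln (real n * p^2)))
                 / (real m * sqrt (real n * p^2))}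
         \<ge> 1 - min (exp (- 12 * real m)) ((real n * p^2) powr (-12))"
proof -
  define x where "x = real n * p^2"
  define K where "K = exp (kappa m \<beta>)"
  define M where "M = max (real m) (ln x)"
  define t where "t = K * sqrt (16 * M) / (real m * sqrt x)"
  let ?P = "resp_dist n m \<theta> \<beta>"
  have x: "x > 0" and m: "m > 0" and "M \<ge> real m"
    using assms(1-3) by (auto simp: x_def M_def)
  then have M: "M > 0" by linarith
  have "measure_pmf.prob ?P {X. 2 * t < err_norm n m p \<theta> \<beta> A X}
      \<le> 48 ^ m * exp (- 2 * t^2 / (3 * (real m * (K / real m) / dconst n m p)^2 * real n * p^2))"
    by (rule prob_err_norm_gt_le[OF assms(5)])
       (use m x M pistar_le_exp_kappa[of _ m \<beta>] in \<open>auto simp: dconst_def x_def K_def t_def\<close>)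
  also have "\<dots> = 48 ^ m * exp (- (24 * M))"
    using tail_exponent_eq[of K M m n p] m x M by (simp add: K_def t_def x_def)
  also have "\<dots> \<le> min (exp (- 12 * real m)) (x powr (-12))"
    by (rule pow48_mult_exp_le_min) (auto simp: M_def x)
  finally have tail: "measure_pmf.prob ?P {X. 2 * t < err_norm n m p \<theta> \<beta> A X}
      \<le> min (exp (- 12 * real m)) (x powr (-12))" .
  have bound: "2 * t = 2 * exp (kappa m \<beta>) * sqrt (16 * max (real m) (ln (real n * p^2)))
                 / (real m * sqrt (real n * p^2))"
    unfolding t_def K_def M_def x_def by (simp only: times_divide_eq_right mult.assoc)
  show ?thesis
    unfolding bound[symmetric] prob_le_eq_1_minus_prob_gt using tail by (simp add: x_def)
qed

end
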